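(* Let $V\subseteq\{0,1\}^n$ be nonempty and let $\preceq$ be the lexicographic term order with $x_1\succ x_2\succ\cdots\succ x_n$. Then \[ \mathcal{S}_{\mathsf{lex}}(V)=\mathcal{S}_{\mathsf{lex}}(V^0)\cup\mathcal{S}_{\mathsf{lex}}(V^1)\cup\big(n\ast(\mathcal{S}_{\mathsf{lex}}(V^0)\cap\mathcal{S}_{\mathsf{lex}}(V^1))\big). \]
   Context: For $a\in\{0,1\}$, $V^a=\{v\in\{0,1\}^{n-1}:(v,a)\in V\}$. For $W\subseteq\{0,1\}^k$, $\mathcal{S}_{\mathsf{lex}}(W)=\{\tau\subseteq[k]:\prod_{i\in\tau}x_i\notin\mathrm{in}(I(W))\}$, where $I(W)\subseteq\mathbb{R}[x_1,\dots,x_k]$ is the vanishing ideal and the initial ideal is with respect to lexicographic order $x_1\succ\cdots\succ x_k$ (so $\mathcal{S}_{\mathsf{lex}}(\emptyset)=\emptyset$). For a collection $K$ of subsets of $[n-1]$, $n\ast K=K\cup\{\sigma\cup\{n\}:\sigma\in K\}$. *)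

theory Defs
  imports Complex_Main "HOL-Library.Poly_Mapping"
begin

text \<open>Multivariate real polynomials: finitely supported maps from monomials
(exponent vectors, nat \<Rightarrow>0 nat, variable i is x_i) to real coefficients.\<close>

type_synonym monom = "nat \<Rightarrow>\<^sub>0 nat"
type_synonym mpoly = "monom \<Rightarrow>\<^sub>0 real"

definition in_ring :: "nat \<Rightarrow> mpoly \<Rightarrow> bool" where
  "in_ring k f \<longleftrightarrow> (\<forall>m\<in>Poly_Mapping.keys f. Poly_Mapping.keys m \<subseteq> {1..k})"

text \<open>A 0/1 point of {0,1}^k is a bool list of length k; coordinate i (1-based) is v!(i-1).\<close>
definition pt :: "bool list \<Rightarrow> nat \<Rightarrow> real" where
  "pt v i = (if v ! (i - 1) then 1 else 0)"

definition eval_mpoly :: "mpoly \<Rightarrow> bool list \<Rightarrow> real" where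
  "eval_mpoly f v = (\<Sum>m\<in>Poly_Mapping.keys f. Poly_Mapping.lookup f m * (\<Prod>i\<in>Poly_Mapping.keys m. pt v i ^ Poly_Mapping.lookup m i))"

definition van_ideal :: "nat \<Rightarrow> bool list set \<Rightarrow> mpoly set" where
  "van_ideal k W = {f. in_ring k f \<and> (\<forall>w\<in>W. eval_mpoly f w = 0)}"

definition gen_ideal :: "nat \<Rightarrow> mpoly set \<Rightarrow> mpoly set" where
  "gen_ideal k G = {p. \<exists>H q. finite H \<and> H \<subseteq> G \<and> (\<forall>h\<in>H. in_ring k (q h))
                          \<and> p = (\<Sum>h\<in>H. q h * h)}"

definition lex_less :: "monom \<Rightarrow> monom \<Rightarrow> bool" where
  "lex_less m1 m2 \<longleftrightarrow> (\<exists>i. Poly_Mapping.lookup m1 i < Poly_Mapping.lookup m2 i \<and> (\<forall>j<i. Poly_Mapping.lookup m1 j = Poly_Mapping.lookup m2 j))"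

definition lead_monom :: "mpoly \<Rightarrow> monom" where
  "lead_monom f = (THE m. m \<in> Poly_Mapping.keys f \<and> (\<forall>m'\<in>Poly_Mapping.keys f. m' = m \<or> lex_less m' m))"

definition lead_term :: "mpoly \<Rightarrow> mpoly" where
  "lead_term f = Poly_Mapping.single (lead_monom f) (Poly_Mapping.lookup f (lead_monom f))"

definition init_ideal :: "nat \<Rightarrow> mpoly set \<Rightarrow> mpoly set" where
  "init_ideal k I = gen_ideal k {lead_term f | f. f \<in> I \<and> f \<noteq> 0}"

definition sqfree_monom :: "nat set \<Rightarrow> mpoly" where
  "sqfree_monom \<tau> = Poly_Mapping.single (\<Sum>i\<in>\<tau>. Poly_Mapping.single i 1) 1"

definition S_lex :: "nat \<Rightarrow> bool list set \<Rightarrow> nat set set" where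
  "S_lex k W = {\<tau>. \<tau> \<subseteq> {1..k} \<and> sqfree_monom \<tau> \<notin> init_ideal k (van_ideal k W)}"

definition restr :: "bool list set \<Rightarrow> bool \<Rightarrow> bool list set" where
  "restr V a = {v. v @ [a] \<in> V}"

definition cone :: "nat \<Rightarrow> nat set set \<Rightarrow> nat set set" where
  "cone n K = K \<union> {\<sigma> \<union> {n} | \<sigma>. \<sigma> \<in> K}"

end

theory Submission
  imports Defs
begin

(* A squarefree monomial x^\<tau> lies in in(I(W)) iff it is the leading monomial of a nonzero
   element of I(W), since leading monomials of an ideal are closed under multiplication by
   monomials.  Because x_n is the lex-smallest variable, substituting x_n := a maps I(V) into
   I(V^a) and sends a leading monomial x^\<sigma> or x_n x^\<sigma> to x^\<sigma>; in the second case this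
   works for a = 1 unless the coefficient of x^\<sigma> cancels the leading one, and then for a = 0.
   Conversely f0 + x_n (f1 - f0) lies in I(V) whenever f0 \<in> I(V^0) and f1 \<in> I(V^1): with f0, f1
   monic of leading monomial x^\<sigma> its leading monomial is x^\<sigma>, and with one of them zero it is
   x_n x^\<sigma>.  So for n \<notin> \<sigma>, x^\<sigma> is a leading monomial for V iff it is one for V^0 and
   for V^1, and x_n x^\<sigma> is one for V iff x^\<sigma> is one for V^0 or for V^1; taking complements
   gives the decomposition of S_lex(V). *)

abbreviation lookup :: "('a \<Rightarrow>\<^sub>0 'b::zero) \<Rightarrow> 'a \<Rightarrow> 'b" where "lookup \<equiv> Poly_Mapping.lookup"
abbreviation keys :: "('a \<Rightarrow>\<^sub>0 'b::zero) \<Rightarrow> 'a set" where "keys \<equiv> Poly_Mapping.keys"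
abbreviation single :: "'a \<Rightarrow> 'b \<Rightarrow> ('a \<Rightarrow>\<^sub>0 'b::zero)" where "single \<equiv> Poly_Mapping.single"

section \<open>Leading monomials for the lexicographic order\<close>

lemma lex_less_iff_less: "lex_less m m' \<longleftrightarrow> m < m'"
  unfolding lex_less_def less_poly_mapping.rep_eq less_fun_def by simp

lemma lead_monom_eq_Max:
  assumes "f \<noteq> 0"
  shows "lead_monom f = Max (keys f)"
  unfolding lead_monom_def lex_less_iff_less
proof (rule the_equality)
  show "Max (keys f) \<in> keys f \<and> (\<forall>m'\<in>keys f. m' = Max (keys f) \<or> m' < Max (keys f))"
    using assms Max_ge[OF finite_keys, of _ f] by (auto simp: le_less)
  show "m = Max (keys f)" if "m \<in> keys f \<and> (\<forall>m'\<in>keys f. m' = m \<or> m' < m)" for m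
    using that by (intro Max_eqI[symmetric]) auto
qed

lemma lead_monom_in_keys: "f \<noteq> 0 \<Longrightarrow> lead_monom f \<in> keys f"
  by (simp add: lead_monom_eq_Max)

lemma le_lead_monom: "m \<in> keys f \<Longrightarrow> m \<le> lead_monom f"
  by (metis Max_ge finite_keys keys_zero empty_iff lead_monom_eq_Max)

lemma lead_monom_eqI: "m \<in> keys f \<Longrightarrow> (\<And>m'. m' \<in> keys f \<Longrightarrow> m' \<le> m) \<Longrightarrow> lead_monom f = m"
  by (metis Max_eqI finite_keys keys_zero empty_iff lead_monom_eq_Max)

lemma lookup_lead_monom_nonzero: "f \<noteq> 0 \<Longrightarrow> lookup f (lead_monom f) \<noteq> 0"
  using lead_monom_in_keys by (simp add: in_keys_iff)

lemma lead_monom_add_lower: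
  assumes "p \<noteq> 0" and lower: "\<And>m. m \<in> keys q \<Longrightarrow> m < lead_monom p"
  shows "p + q \<noteq> 0" "lead_monom (p + q) = lead_monom p"
proof -
  have "lead_monom p \<notin> keys q"
    using lower by blast
  then have lead: "lead_monom p \<in> keys (p + q)"
    using lookup_lead_monom_nonzero[OF assms(1)] by (simp add: in_keys_iff lookup_add)
  then show "p + q \<noteq> 0"
    by auto
  show "lead_monom (p + q) = lead_monom p"
  proof (rule lead_monom_eqI[OF lead])
    show "m \<le> lead_monom p" if "m \<in> keys (p + q)" for m
      using that keys_add[of p q] lower le_lead_monom by fastforce
  qed
qed

lemma single_strict_mono: "j < k \<Longrightarrow> single n j < (single n k :: monom)"
  by (auto simp: less_poly_mapping.rep_eq less_fun_def lookup_single when_def intro!: exI[of _ n])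

lemma lookup_single_mult: "lookup (single b c * f) (b + m) = c * lookup (f :: mpoly) m"
  by (simp add: lookup_mult lookup_single when_mult mult_when)

lemma single_eq_zero_iff [simp]: "single k v = 0 \<longleftrightarrow> v = 0"
  by (metis lookup_single_eq lookup_zero single_zero)

lemma keys_single_mult: "keys (single b c * f) \<subseteq> (+) b ` keys (f :: mpoly)"
  using keys_mult[of "single b c" f] by (auto split: if_splits)

lemma lead_monom_single_mult:
  assumes "c \<noteq> 0" "f \<noteq> 0"
  shows "lead_monom (single b c * f) = b + lead_monom f"
proof (rule lead_monom_eqI)
  show "b + lead_monom f \<in> keys (single b c * f)"
    using assms lookup_lead_monom_nonzero by (simp add: in_keys_iff lookup_single_mult)
  show "m \<le> b + lead_monom f" if "m \<in> keys (single b c * f)" for m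
    using that keys_single_mult le_lead_monom by (fastforce intro: add_left_mono)
qed

lemma poly_mapping_sum_single: "f = (\<Sum>m\<in>keys f. single m (lookup f m))"
proof (rule poly_mapping_eqI)
  fix k
  show "lookup f k = lookup (\<Sum>m\<in>keys f. single m (lookup f m)) k"
    by (cases "k \<in> keys f") (simp_all add: lookup_sum lookup_single when_def in_keys_iff)
qed

section \<open>Evaluation and vanishing ideals\<close>

definition eval_monom :: "monom \<Rightarrow> bool list \<Rightarrow> real" where
  "eval_monom m v = (\<Prod>i\<in>keys m. pt v i ^ lookup m i)"

lemma eval_monom_superset:
  "finite S \<Longrightarrow> keys m \<subseteq> S \<Longrightarrow> eval_monom m v = (\<Prod>i\<in>S. pt v i ^ lookup m i)"
  unfolding eval_monom_def by (rule prod.mono_neutral_left) (auto simp: in_keys_iff)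

lemma eval_monom_add: "eval_monom (a + b) v = eval_monom a v * eval_monom b v"
proof -
  let ?S = "keys a \<union> keys b"
  have "eval_monom (a + b) v = (\<Prod>i\<in>?S. pt v i ^ lookup a i * pt v i ^ lookup b i)"
    using keys_add[of a b] by (simp add: eval_monom_superset[of ?S] lookup_add power_add)
  also have "\<dots> = eval_monom a v * eval_monom b v"
    by (simp add: prod.distrib eval_monom_superset[of ?S])
  finally show ?thesis .
qed

lemma eval_mpoly_superset:
  "finite S \<Longrightarrow> keys f \<subseteq> S \<Longrightarrow> eval_mpoly f v = (\<Sum>m\<in>S. lookup f m * eval_monom m v)"
  unfolding eval_mpoly_def eval_monom_def[symmetric]
  by (rule sum.mono_neutral_left) (auto simp: in_keys_iff)

lemma eval_mpoly_add: "eval_mpoly (f + g) v = eval_mpoly f v + eval_mpoly g v"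
  using keys_add[of f g]
  by (simp add: eval_mpoly_superset[of "keys f \<union> keys g"] lookup_add distrib_right sum.distrib)

lemma eval_mpoly_diff: "eval_mpoly (f - g) v = eval_mpoly f v - eval_mpoly g v"
  using keys_diff[of f g]
  by (simp add: eval_mpoly_superset[of "keys f \<union> keys g"] lookup_minus left_diff_distrib sum_subtractf)

lemma eval_mpoly_sum: "eval_mpoly (\<Sum>a\<in>A. F a) v = (\<Sum>a\<in>A. eval_mpoly (F a) v)"
  by (induction A rule: infinite_finite_induct) (simp_all add: eval_mpoly_def[of 0] eval_mpoly_add)

lemma eval_mpoly_single: "eval_mpoly (single m c) v = c * eval_monom m v"
  by (simp add: eval_mpoly_def eval_monom_def)

lemma eval_mpoly_mult: "eval_mpoly (f * g) v = eval_mpoly f v * eval_mpoly g v"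
proof -
  have single_mult: "eval_mpoly (single b c * g) v = c * eval_monom b v * eval_mpoly g v" for b c
  proof -
    have "single b c * g = (\<Sum>m\<in>keys g. single (b + m) (c * lookup g m))"
      by (subst poly_mapping_sum_single[of g]) (simp add: sum_distrib_left mult_single)
    then show ?thesis
      by (simp add: eval_mpoly_sum eval_mpoly_single eval_monom_add sum_distrib_left
          eval_mpoly_superset[of "keys g" g] mult_ac)
  qed
  have "f * g = (\<Sum>m\<in>keys f. single m (lookup f m) * g)"
    by (subst poly_mapping_sum_single[of f]) (simp add: sum_distrib_right)
  then show ?thesis
    by (simp add: eval_mpoly_sum single_mult sum_distrib_right eval_mpoly_superset[of "keys f" f])
qed

lemma in_ring_add: "in_ring k f \<Longrightarrow> in_ring k g \<Longrightarrow> in_ring k (f + g)"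
  unfolding in_ring_def using keys_add[of f g] by blast

lemma in_ring_diff: "in_ring k f \<Longrightarrow> in_ring k g \<Longrightarrow> in_ring k (f - g)"
  unfolding in_ring_def using keys_diff[of f g] by blast

lemma in_ring_mult:
  assumes "in_ring k f" "in_ring k g"
  shows "in_ring k (f * g)"
  unfolding in_ring_def
proof
  fix m assume "m \<in> keys (f * g)"
  then obtain a b where "m = a + b" "a \<in> keys f" "b \<in> keys g"
    using keys_mult[of f g] by blast
  then show "keys m \<subseteq> {1..k}"
    using assms keys_add[of a b] unfolding in_ring_def by blast
qed

lemma in_ring_single: "keys m \<subseteq> {1..k} \<Longrightarrow> in_ring k (single m c)"
  unfolding in_ring_def by simp

lemma in_ring_mono: "k \<le> k' \<Longrightarrow> in_ring k f \<Longrightarrow> in_ring k' f"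
  unfolding in_ring_def by fastforce

lemma van_ideal_mult: "f \<in> van_ideal k W \<Longrightarrow> in_ring k g \<Longrightarrow> g * f \<in> van_ideal k W"
  unfolding van_ideal_def by (simp add: in_ring_mult eval_mpoly_mult)

section \<open>Squarefree monomials in the initial ideal\<close>

definition monom_of_set :: "nat set \<Rightarrow> monom" where
  "monom_of_set \<tau> = (\<Sum>i\<in>\<tau>. single i 1)"

lemma lookup_monom_of_set: "finite \<tau> \<Longrightarrow> lookup (monom_of_set \<tau>) i = of_bool (i \<in> \<tau>)"
  unfolding monom_of_set_def by (simp add: lookup_sum lookup_single when_def)

lemma keys_monom_of_set: "finite \<tau> \<Longrightarrow> keys (monom_of_set \<tau>) = \<tau>"
  by (auto simp: in_keys_iff lookup_monom_of_set)

lemma monom_of_set_insert: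
  "finite \<tau> \<Longrightarrow> n \<notin> \<tau> \<Longrightarrow> monom_of_set (insert n \<tau>) = single n 1 + monom_of_set \<tau>"
  by (simp add: monom_of_set_def)

definition lead_monoms :: "mpoly set \<Rightarrow> monom set" where
  "lead_monoms I = lead_monom ` (I - {0})"

lemma lead_monomsI: "f \<in> I \<Longrightarrow> f \<noteq> 0 \<Longrightarrow> lead_monom f = \<sigma> \<Longrightarrow> \<sigma> \<in> lead_monoms I"
  unfolding lead_monoms_def by blast

lemma lead_monomsE:
  assumes "\<sigma> \<in> lead_monoms I"
  obtains f where "f \<in> I" "f \<noteq> 0" "lead_monom f = \<sigma>"
  using assms unfolding lead_monoms_def by blast

lemma add_lead_monom_in_lead_monoms:
  assumes "f \<in> van_ideal k W" "f \<noteq> 0" "keys b \<subseteq> {1..k}"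
  shows "b + lead_monom f \<in> lead_monoms (van_ideal k W)"
proof -
  have "single b 1 * f \<in> van_ideal k W"
    using assms by (simp add: van_ideal_mult in_ring_single)
  moreover have "single b 1 * f \<noteq> 0"
    using assms(2) by simp
  ultimately show ?thesis
    using lead_monom_single_mult[of 1 f b] assms(2) by (simp add: lead_monomsI)
qed

lemma sqfree_monom_in_init_ideal_iff:
  assumes "\<tau> \<subseteq> {1..k}"
  shows "sqfree_monom \<tau> \<in> init_ideal k (van_ideal k W) \<longleftrightarrow>
         monom_of_set \<tau> \<in> lead_monoms (van_ideal k W)"
proof
  let ?M = "monom_of_set \<tau>"
  have fin: "finite \<tau>"
    using assms finite_subset by blast
  assume "sqfree_monom \<tau> \<in> init_ideal k (van_ideal k W)"
  then obtain H q where H: "H \<subseteq> {lead_term f | f. f \<in> van_ideal k W \<and> f \<noteq> 0}"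
      and sum: "single ?M 1 = (\<Sum>h\<in>H. q h * h)"
    unfolding init_ideal_def gen_ideal_def sqfree_monom_def monom_of_set_def by blast
  have "(\<Sum>h\<in>H. lookup (q h * h) ?M) \<noteq> 0"
    using arg_cong[OF sum, of "\<lambda>p. lookup p ?M"] by (simp add: lookup_sum)
  then obtain h where "h \<in> H" "?M \<in> keys (q h * h)"
    by (meson in_keys_iff sum.not_neutral_contains_not_neutral)
  then obtain f a where f: "f \<in> van_ideal k W" "f \<noteq> 0" and a: "?M = a + lead_monom f"
    using H keys_mult[of "q h" h] by (force simp: lead_term_def split: if_splits)
  have "keys a \<subseteq> keys ?M"
    using a by (auto simp: in_keys_iff lookup_add)
  then have "keys a \<subseteq> {1..k}"
    using assms keys_monom_of_set[OF fin] by blast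
  then show "?M \<in> lead_monoms (van_ideal k W)"
    using add_lead_monom_in_lead_monoms[OF f] a by simp
next
  assume "monom_of_set \<tau> \<in> lead_monoms (van_ideal k W)"
  then obtain f where f: "f \<in> van_ideal k W" "f \<noteq> 0" "lead_monom f = monom_of_set \<tau>"
    by (rule lead_monomsE)
  define c where "c = lookup f (lead_monom f)"
  have "c \<noteq> 0"
    using f(2) lookup_lead_monom_nonzero unfolding c_def by blast
  then have "sqfree_monom \<tau> = single 0 (1 / c) * lead_term f"
    by (simp add: sqfree_monom_def monom_of_set_def lead_term_def mult_single f(3) c_def)
  then show "sqfree_monom \<tau> \<in> init_ideal k (van_ideal k W)"
    unfolding init_ideal_def gen_ideal_def using f(1,2)
    by (intro CollectI exI[of _ "{lead_term f}"] exI[of _ "\<lambda>_. single 0 (1 / c)"])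
       (auto simp: in_ring_single)
qed

lemma mem_S_lex_iff:
  "\<tau> \<in> S_lex k W \<longleftrightarrow> \<tau> \<subseteq> {1..k} \<and> monom_of_set \<tau> \<notin> lead_monoms (van_ideal k W)"
  unfolding S_lex_def using sqfree_monom_in_init_ideal_iff by blast

section \<open>Substituting 0 or 1 for the last variable\<close>

definition drop_var :: "nat \<Rightarrow> monom \<Rightarrow> monom" where
  "drop_var n m = Poly_Mapping.update n 0 m"

lemma lookup_drop_var: "lookup (drop_var n m) i = (if i = n then 0 else lookup m i)"
  by (simp add: drop_var_def lookup_update)

lemma keys_drop_var: "keys (drop_var n m) = keys m - {n}"
  by (simp add: drop_var_def keys_update)

lemma drop_var_id: "lookup m n = 0 \<Longrightarrow> drop_var n m = m"
  by (simp add: poly_mapping_eq_iff fun_eq_iff lookup_drop_var)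

lemma drop_var_eq_iff:
  "lookup \<sigma> n = 0 \<Longrightarrow> drop_var n m = \<sigma> \<longleftrightarrow> m = single n (lookup m n) + \<sigma>"
  by (auto simp: poly_mapping_eq_iff fun_eq_iff lookup_drop_var lookup_add lookup_single when_def)

lemma drop_var_mono:
  assumes "keys m \<subseteq> {..n}" "keys m' \<subseteq> {..n}" "m \<le> m'"
  shows "drop_var n m \<le> drop_var n m'"
proof (cases "m = m'")
  case False
  with assms(3) have "m < m'"
    by simp
  then obtain i where i: "lookup m i < lookup m' i" "\<forall>j<i. lookup m j = lookup m' j"
    by (auto simp: less_poly_mapping.rep_eq less_fun_def)
  have "i \<in> keys m'"
    using i(1) by (simp add: in_keys_iff)
  with assms(2) have "i \<le> n"
    by auto
  show ?thesis
  proof (cases "i = n")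
    case True
    have "lookup m j = lookup m' j" if "j \<noteq> n" for j
    proof (cases "j < n")
      case False
      with that assms(1,2) have "j \<notin> keys m" "j \<notin> keys m'"
        by auto
      then show ?thesis
        by (simp add: in_keys_iff)
    qed (use i(2) True in simp)
    then have "drop_var n m = drop_var n m'"
      by (auto simp: poly_mapping_eq_iff fun_eq_iff lookup_drop_var)
    then show ?thesis by simp
  next
    case False
    with \<open>i \<le> n\<close> i show ?thesis
      by (auto simp: less_eq_poly_mapping.rep_eq less_fun_def lookup_drop_var intro!: exI[of _ i])
  qed
qed simp

definition subst_var :: "nat \<Rightarrow> bool \<Rightarrow> mpoly \<Rightarrow> mpoly" where
  "subst_var n a f = (\<Sum>m\<in>keys f. single (drop_var n m) (lookup f m * of_bool a ^ lookup m n))"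

lemma lookup_subst_var:
  "lookup (subst_var n a f) \<mu> =
     (\<Sum>m\<in>keys f. if drop_var n m = \<mu> then lookup f m * of_bool a ^ lookup m n else 0)"
  by (simp add: subst_var_def lookup_sum lookup_single when_def)

lemma keys_subst_var: "keys (subst_var n a f) \<subseteq> drop_var n ` keys f"
  unfolding subst_var_def by (rule order.trans[OF keys_sum]) auto

lemma in_ring_subst_var: "in_ring n f \<Longrightarrow> in_ring (n - 1) (subst_var n a f)"
  unfolding in_ring_def using keys_subst_var by (fastforce simp: keys_drop_var)

lemma subst_var_id:
  assumes "in_ring (n - 1) f"
  shows "subst_var n a f = f"
proof -
  have "lookup m n = 0" if "m \<in> keys f" for m
    using assms that unfolding in_ring_def by (force simp: in_keys_iff)
  then have "subst_var n a f = (\<Sum>m\<in>keys f. single m (lookup f m))"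
    unfolding subst_var_def by (simp add: drop_var_id)
  also have "\<dots> = f"
    by (rule poly_mapping_sum_single[symmetric])
  finally show ?thesis .
qed

lemma pt_append:
  assumes "1 \<le> i" "i \<le> length v"
  shows "pt (v @ [a]) i = pt v i"
proof -
  from assms have "i - 1 < length v"
    by arith
  then show ?thesis
    by (simp add: pt_def nth_append)
qed

lemma pt_append_last: "pt (v @ [a]) (Suc (length v)) = of_bool a"
  by (simp add: pt_def)

lemma eval_monom_append:
  assumes "keys m \<subseteq> {1..n}" "n = Suc (length v)"
  shows "eval_monom m (v @ [a]) = eval_monom (drop_var n m) v * of_bool a ^ lookup m n"
proof -
  have "eval_monom m (v @ [a]) = (\<Prod>i\<in>{1..n}. pt (v @ [a]) i ^ lookup m i)"
    using assms(1) by (rule eval_monom_superset[OF finite_atLeastAtMost])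
  also have "\<dots> = (\<Prod>i\<in>{1..length v}. pt v i ^ lookup (drop_var n m) i) * of_bool a ^ lookup m n"
    using assms(2) by (simp add: prod.cl_ivl_Suc pt_append pt_append_last lookup_drop_var)
  also have "(\<Prod>i\<in>{1..length v}. pt v i ^ lookup (drop_var n m) i) = eval_monom (drop_var n m) v"
    using assms by (intro eval_monom_superset[symmetric]) (auto simp: keys_drop_var)
  finally show ?thesis .
qed

lemma eval_mpoly_subst_var:
  assumes "in_ring n f" "n = Suc (length v)"
  shows "eval_mpoly (subst_var n a f) v = eval_mpoly f (v @ [a])"
proof -
  have "eval_mpoly (subst_var n a f) v =
        (\<Sum>m\<in>keys f. lookup f m * (eval_monom (drop_var n m) v * of_bool a ^ lookup m n))"
    by (simp add: subst_var_def eval_mpoly_sum eval_mpoly_single mult_ac)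
  also have "\<dots> = (\<Sum>m\<in>keys f. lookup f m * eval_monom m (v @ [a]))"
    using assms by (intro sum.cong) (auto simp: in_ring_def eval_monom_append)
  also have "\<dots> = eval_mpoly f (v @ [a])"
    by (simp add: eval_mpoly_superset[of "keys f" f])
  finally show ?thesis .
qed

lemma eval_mpoly_append:
  assumes "in_ring (length v) f"
  shows "eval_mpoly f (v @ [a]) = eval_mpoly f v"
proof -
  have "in_ring (Suc (length v)) f"
    using assms by (rule in_ring_mono[rotated]) simp
  then have "eval_mpoly f (v @ [a]) = eval_mpoly (subst_var (Suc (length v)) a f) v"
    by (simp add: eval_mpoly_subst_var)
  also have "\<dots> = eval_mpoly f v"
    using assms by (simp add: subst_var_id)
  finally show ?thesis .
qed

lemma van_ideal_subst_var:
  assumes "V \<subseteq> {v. length v = n}" "1 \<le> n" "f \<in> van_ideal n V"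
  shows "subst_var n a f \<in> van_ideal (n - 1) (restr V a)"
  using assms in_ring_subst_var[of n f a] eval_mpoly_subst_var[of n f _ a]
  by (auto simp: van_ideal_def restr_def)

lemma lead_monom_subst_var:
  assumes "in_ring n f" "lookup (subst_var n a f) (drop_var n (lead_monom f)) \<noteq> 0"
  shows "lead_monom (subst_var n a f) = drop_var n (lead_monom f)"
proof (rule lead_monom_eqI)
  show "drop_var n (lead_monom f) \<in> keys (subst_var n a f)"
    using assms(2) by (simp add: in_keys_iff)
  then have "f \<noteq> 0"
    using keys_subst_var by fastforce
  have ring: "keys m \<subseteq> {..n}" if "m \<in> keys f" for m
    using assms(1) that unfolding in_ring_def by fastforce
  show "\<mu> \<le> drop_var n (lead_monom f)" if "\<mu> \<in> keys (subst_var n a f)" for \<mu>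
    using that keys_subst_var ring lead_monom_in_keys[OF \<open>f \<noteq> 0\<close>]
    by (fastforce intro: drop_var_mono le_lead_monom)
qed

lemma drop_var_eq_iff_below_lead_monom:
  assumes "m \<in> keys f" "lead_monom f = single n k + \<sigma>" "lookup \<sigma> n = 0"
  shows "drop_var n m = \<sigma> \<longleftrightarrow> m \<in> (\<lambda>j. single n j + \<sigma>) ` {..k}"
proof
  assume "drop_var n m = \<sigma>"
  then have m_eq: "m = single n (lookup m n) + \<sigma>"
    using assms(3) by (simp add: drop_var_eq_iff)
  have "\<not> k < lookup m n"
  proof
    assume "k < lookup m n"
    then have "single n k < single n (lookup m n)"
      by (rule single_strict_mono)
    then have "lead_monom f < m"
      unfolding assms(2) by (subst m_eq) (rule add_strict_right_mono)
    with le_lead_monom[OF assms(1)] show False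
      by simp
  qed
  then show "m \<in> (\<lambda>j. single n j + \<sigma>) ` {..k}"
    using m_eq by (intro image_eqI[where x = "lookup m n"]) simp_all
qed (use assms(3) in \<open>auto simp: drop_var_eq_iff lookup_add\<close>)

lemma lookup_subst_var_lead_monom:
  assumes "lead_monom f = single n k + \<sigma>" "lookup \<sigma> n = 0"
  shows "lookup (subst_var n a f) \<sigma> = (\<Sum>j\<le>k. lookup f (single n j + \<sigma>) * of_bool a ^ j)"
proof -
  let ?g = "\<lambda>j. single n j + \<sigma>"
  have lookup_g: "lookup (?g j) n = j" for j
    using assms(2) by (simp add: lookup_add)
  have "lookup (subst_var n a f) \<sigma> =
        (\<Sum>m\<in>keys f. if m \<in> ?g ` {..k} then lookup f m * of_bool a ^ lookup m n else 0)"
    unfolding lookup_subst_var using assms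
    by (intro sum.cong) (simp_all add: drop_var_eq_iff_below_lead_monom)
  also have "\<dots> = (\<Sum>m\<in>keys f \<inter> ?g ` {..k}. lookup f m * of_bool a ^ lookup m n)"
    by (simp add: sum.inter_restrict)
  also have "\<dots> = (\<Sum>m\<in>?g ` {..k}. lookup f m * of_bool a ^ lookup m n)"
    by (rule sum.mono_neutral_left) (auto simp: in_keys_iff)
  also have "\<dots> = (\<Sum>j\<le>k. lookup f (?g j) * of_bool a ^ j)"
    by (subst sum.reindex) (auto simp: inj_on_def lookup_g dest: arg_cong[where f = "\<lambda>m. lookup m n"])
  finally show ?thesis .
qed

section \<open>Interpolating between the two halves of V\<close>

definition var :: "nat \<Rightarrow> mpoly" where
  "var i = single (single i 1) 1"

lemma eval_mpoly_var: "eval_mpoly (var i) v = pt v i"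
  by (simp add: var_def eval_mpoly_single eval_monom_def)

lemma zero_in_van_ideal: "0 \<in> van_ideal k W"
  by (simp add: van_ideal_def in_ring_def eval_mpoly_def)

lemma van_ideal_interpolate:
  assumes "V \<subseteq> {v. length v = n}" "1 \<le> n"
    and f0: "f0 \<in> van_ideal (n - 1) (restr V False)"
    and f1: "f1 \<in> van_ideal (n - 1) (restr V True)"
  shows "f0 + var n * (f1 - f0) \<in> van_ideal n V"
proof -
  have ring: "in_ring (n - 1) f0" "in_ring (n - 1) f1"
    using f0 f1 by (simp_all add: van_ideal_def)
  then have "in_ring n (f0 + var n * (f1 - f0))"
    using assms(2) unfolding var_def
    by (intro in_ring_add in_ring_mult in_ring_diff in_ring_single) (auto intro: in_ring_mono[rotated])
  moreover have "eval_mpoly (f0 + var n * (f1 - f0)) w = 0" if "w \<in> V" for w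
  proof -
    have "w \<noteq> []"
      using that assms(1,2) by auto
    then obtain v a where w: "w = v @ [a]"
      by (cases w rule: rev_exhaust) auto
    have n: "n - 1 = length v" "n = Suc (length v)"
      using that assms(1,2) w by auto
    have "v \<in> restr V a"
      using that w by (simp add: restr_def)
    then have vanish: "eval_mpoly (if a then f1 else f0) v = 0"
      using f0 f1 by (cases a) (auto simp: van_ideal_def)
    have "eval_mpoly (f0 + var n * (f1 - f0)) w =
          eval_mpoly f0 v + of_bool a * (eval_mpoly f1 v - eval_mpoly f0 v)"
      using ring unfolding w n
      by (simp add: eval_mpoly_add eval_mpoly_mult eval_mpoly_diff eval_mpoly_var
          eval_mpoly_append pt_append_last)
    with vanish show ?thesis
      by (cases a) simp_all
  qed
  ultimately show ?thesis
    by (simp add: van_ideal_def)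
qed

section \<open>Leading monomials of I(V), I(V^0) and I(V^1)\<close>

lemma lead_monoms_monicE:
  assumes "\<sigma> \<in> lead_monoms (van_ideal k W)"
  obtains f where "f \<in> van_ideal k W" "lead_monom f = \<sigma>" "lookup f \<sigma> = 1"
proof -
  obtain g where g: "g \<in> van_ideal k W" "g \<noteq> 0" "lead_monom g = \<sigma>"
    using assms by (rule lead_monomsE)
  define c where "c = lookup g \<sigma>"
  have "c \<noteq> 0"
    using g lookup_lead_monom_nonzero unfolding c_def by blast
  show ?thesis
  proof
    show "single 0 (1 / c) * g \<in> van_ideal k W"
      using g(1) by (simp add: van_ideal_mult in_ring_single)
    show "lead_monom (single 0 (1 / c) * g) = \<sigma>"
      using \<open>c \<noteq> 0\<close> g by (simp add: lead_monom_single_mult)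
    show "lookup (single 0 (1 / c) * g) \<sigma> = 1"
      using \<open>c \<noteq> 0\<close> lookup_single_mult[of 0 "1 / c" g \<sigma>] by (simp add: c_def)
  qed
qed

lemma lead_monoms_restr_if_lookup_subst_var:
  assumes "V \<subseteq> {v. length v = n}" "1 \<le> n" "f \<in> van_ideal n V"
    and "lookup (subst_var n a f) (drop_var n (lead_monom f)) \<noteq> 0"
  shows "drop_var n (lead_monom f) \<in> lead_monoms (van_ideal (n - 1) (restr V a))"
proof -
  have "subst_var n a f \<noteq> 0"
    using assms(4) by auto
  moreover have "lead_monom (subst_var n a f) = drop_var n (lead_monom f)"
    using assms(3,4) by (simp add: van_ideal_def lead_monom_subst_var)
  moreover have "subst_var n a f \<in> van_ideal (n - 1) (restr V a)"
    using assms(1-3) by (rule van_ideal_subst_var)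
  ultimately show ?thesis
    by (blast intro: lead_monomsI)
qed

lemma lead_monoms_restr_if_lead_monoms:
  assumes "V \<subseteq> {v. length v = n}" "1 \<le> n"
    and "\<sigma> \<in> lead_monoms (van_ideal n V)" "lookup \<sigma> n = 0"
  shows "\<sigma> \<in> lead_monoms (van_ideal (n - 1) (restr V a))"
proof -
  obtain f where f: "f \<in> van_ideal n V" "f \<noteq> 0" "lead_monom f = \<sigma>"
    using assms(3) by (rule lead_monomsE)
  have "lookup (subst_var n a f) \<sigma> = lookup f \<sigma>"
    using lookup_subst_var_lead_monom[of f n 0 \<sigma> a] f(3) assms(4) by simp
  then have "lookup (subst_var n a f) (drop_var n (lead_monom f)) \<noteq> 0"
    using lookup_lead_monom_nonzero[OF f(2)] f(3) assms(4) by (simp add: drop_var_id)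
  then show ?thesis
    using lead_monoms_restr_if_lookup_subst_var[OF assms(1,2) f(1)] f(3) assms(4)
    by (simp add: drop_var_id)
qed

lemma lead_monoms_restr_if_var_lead_monoms:
  assumes "V \<subseteq> {v. length v = n}" "1 \<le> n"
    and "single n 1 + \<sigma> \<in> lead_monoms (van_ideal n V)" "lookup \<sigma> n = 0"
  shows "\<sigma> \<in> lead_monoms (van_ideal (n - 1) (restr V False)) \<or>
         \<sigma> \<in> lead_monoms (van_ideal (n - 1) (restr V True))"
proof -
  obtain f where f: "f \<in> van_ideal n V" "f \<noteq> 0" "lead_monom f = single n 1 + \<sigma>"
    using assms(3) by (rule lead_monomsE)
  have drop: "drop_var n (lead_monom f) = \<sigma>"
    using f(3) assms(4) by (simp add: drop_var_eq_iff lookup_add)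
  have coeff: "lookup (subst_var n a f) \<sigma> = lookup f \<sigma> + lookup f (lead_monom f) * of_bool a" for a
    using lookup_subst_var_lead_monom[of f n 1 \<sigma> a] f(3) assms(4) by simp
  have "\<exists>a. lookup (subst_var n a f) \<sigma> \<noteq> 0"
  proof (cases "lookup f \<sigma> = 0")
    case True
    then show ?thesis
      using coeff[of True] lookup_lead_monom_nonzero[OF f(2)] by (intro exI[of _ True]) simp
  next
    case False
    then show ?thesis
      using coeff[of False] by (intro exI[of _ False]) simp
  qed
  then obtain a where "lookup (subst_var n a f) (drop_var n (lead_monom f)) \<noteq> 0"
    using drop by auto
  then show ?thesis
    using lead_monoms_restr_if_lookup_subst_var[OF assms(1,2) f(1)] drop by (cases a) auto
qed

lemma add_single_less:
  fixes \<rho> \<sigma> :: monom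
  assumes "\<rho> < \<sigma>" "\<forall>i\<in>keys \<sigma>. i < n"
  shows "single n k + \<rho> < \<sigma>"
proof -
  obtain i where i: "lookup \<rho> i < lookup \<sigma> i" "\<forall>j<i. lookup \<rho> j = lookup \<sigma> j"
    using assms(1) by (auto simp: less_poly_mapping.rep_eq less_fun_def)
  have "i \<in> keys \<sigma>"
    using i(1) by (auto simp: in_keys_iff)
  with assms(2) have "i < n"
    by blast
  with i show ?thesis
    by (auto simp: less_poly_mapping.rep_eq less_fun_def lookup_add lookup_single when_def
        intro!: exI[of _ i])
qed

lemma lead_monoms_if_lead_monoms_restr:
  assumes "V \<subseteq> {v. length v = n}" "1 \<le> n"
    and "\<sigma> \<in> lead_monoms (van_ideal (n - 1) (restr V False))"
    and "\<sigma> \<in> lead_monoms (van_ideal (n - 1) (restr V True))"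
  shows "\<sigma> \<in> lead_monoms (van_ideal n V)"
proof -
  obtain f0 where f0: "f0 \<in> van_ideal (n - 1) (restr V False)" "lead_monom f0 = \<sigma>" "lookup f0 \<sigma> = 1"
    using assms(3) by (rule lead_monoms_monicE)
  obtain f1 where f1: "f1 \<in> van_ideal (n - 1) (restr V True)" "lead_monom f1 = \<sigma>" "lookup f1 \<sigma> = 1"
    using assms(4) by (rule lead_monoms_monicE)
  have "f0 \<noteq> 0" "f1 \<noteq> 0"
    using f0(3) f1(3) by auto
  have "\<forall>i\<in>keys \<sigma>. i < n"
    using f0(1) lead_monom_in_keys[OF \<open>f0 \<noteq> 0\<close>] f0(2) assms(2)
    by (force simp: van_ideal_def in_ring_def)
  \<comment> \<open>The leading terms of f0 and f1 cancel in f1 - f0, and multiplying by the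
      lex-smallest variable x_n keeps the remaining monomials below \<sigma>.\<close>
  have lower: "m < lead_monom f0" if "m \<in> keys (var n * (f1 - f0))" for m
  proof -
    have "m \<in> (+) (single n 1) ` keys (f1 - f0)"
      using that keys_single_mult unfolding var_def by blast
    then obtain \<rho> where \<rho>: "m = single n 1 + \<rho>" "\<rho> \<in> keys (f1 - f0)"
      by blast
    then have "\<rho> \<noteq> \<sigma>" "\<rho> \<in> keys f0 \<or> \<rho> \<in> keys f1"
      using f0(3) f1(3) keys_diff[of f1 f0] by (auto simp: in_keys_iff lookup_minus)
    then have "\<rho> < \<sigma>"
      using le_lead_monom f0(2) f1(2) by (metis order.not_eq_order_implies_strict)
    then show ?thesis
      using \<rho>(1) f0(2) \<open>\<forall>i\<in>keys \<sigma>. i < n\<close> by (simp add: add_single_less)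
  qed
  have "f0 + var n * (f1 - f0) \<noteq> 0" "lead_monom (f0 + var n * (f1 - f0)) = \<sigma>"
    using lead_monom_add_lower[of f0 "var n * (f1 - f0)"] lower \<open>f0 \<noteq> 0\<close> f0(2) by auto
  with van_ideal_interpolate[OF assms(1,2) f0(1) f1(1)] show ?thesis
    by (rule lead_monomsI)
qed

lemma var_lead_monoms_if_lead_monoms_restr:
  assumes "V \<subseteq> {v. length v = n}" "1 \<le> n"
    and "\<sigma> \<in> lead_monoms (van_ideal (n - 1) (restr V a))"
  shows "single n 1 + \<sigma> \<in> lead_monoms (van_ideal n V)"
proof -
  obtain f where f: "f \<in> van_ideal (n - 1) (restr V a)" "f \<noteq> 0" "lead_monom f = \<sigma>"
    using assms(3) by (rule lead_monomsE)
  \<comment> \<open>Interpolating between f and 0 gives x_n f or f - x_n f.\<close>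
  obtain f0 f1 c where f01: "f0 \<in> van_ideal (n - 1) (restr V False)" "f1 \<in> van_ideal (n - 1) (restr V True)"
    and "c \<noteq> 0" "f1 - f0 = single 0 c * f" "keys f0 \<subseteq> keys f"
  proof (cases a)
    case True
    with that[of 0 f 1] f(1) show ?thesis
      by (simp add: zero_in_van_ideal)
  next
    case False
    with that[of f 0 "-1"] f(1) show ?thesis
      by (simp add: zero_in_van_ideal single_uminus)
  qed
  then have shifted: "var n * (f1 - f0) = single (single n 1) c * f"
    by (simp add: var_def mult_single flip: mult.assoc)
  have "\<sigma> < single n 1 + \<sigma>"
    using add_strict_right_mono[OF single_strict_mono[of 0 1 n], of \<sigma>] by simp
  then have lower: "m < lead_monom (var n * (f1 - f0))" if "m \<in> keys f0" for m
    using that \<open>keys f0 \<subseteq> keys f\<close> le_lead_monom[of m f] f(3) \<open>c \<noteq> 0\<close> f(2)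
    by (auto simp: shifted lead_monom_single_mult)
  have "var n * (f1 - f0) \<noteq> 0"
    using \<open>c \<noteq> 0\<close> f(2) shifted by simp
  then have "var n * (f1 - f0) + f0 \<noteq> 0" "lead_monom (var n * (f1 - f0) + f0) = single n 1 + \<sigma>"
    using lead_monom_add_lower[of "var n * (f1 - f0)" f0] lower \<open>c \<noteq> 0\<close> f(2,3)
    by (auto simp: shifted lead_monom_single_mult)
  with van_ideal_interpolate[OF assms(1,2) f01] show ?thesis
    by (simp add: add.commute lead_monomsI)
qed

lemma lead_monoms_van_ideal_iff:
  assumes "V \<subseteq> {v. length v = n}" "1 \<le> n" "lookup \<sigma> n = 0"
  shows "\<sigma> \<in> lead_monoms (van_ideal n V) \<longleftrightarrow>
         \<sigma> \<in> lead_monoms (van_ideal (n - 1) (restr V False)) \<and>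
         \<sigma> \<in> lead_monoms (van_ideal (n - 1) (restr V True))"
  using assms lead_monoms_restr_if_lead_monoms lead_monoms_if_lead_monoms_restr by blast

lemma var_lead_monoms_van_ideal_iff:
  assumes "V \<subseteq> {v. length v = n}" "1 \<le> n" "lookup \<sigma> n = 0"
  shows "single n 1 + \<sigma> \<in> lead_monoms (van_ideal n V) \<longleftrightarrow>
         \<sigma> \<in> lead_monoms (van_ideal (n - 1) (restr V False)) \<or>
         \<sigma> \<in> lead_monoms (van_ideal (n - 1) (restr V True))"
  using assms lead_monoms_restr_if_var_lead_monoms var_lead_monoms_if_lead_monoms_restr by blast

lemma mem_cone_iff:
  assumes "\<forall>\<sigma>\<in>K. n \<notin> \<sigma>"
  shows "\<tau> \<in> cone n K \<longleftrightarrow> (if n \<in> \<tau> then \<tau> - {n} \<in> K else \<tau> \<in> K)"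
  using assms unfolding cone_def by (auto simp: insert_absorb)

lemma subset_atLeastAtMost_diff_one_iff: "(n::nat) \<notin> \<tau> \<Longrightarrow> \<tau> \<subseteq> {1..n} \<longleftrightarrow> \<tau> \<subseteq> {1..n - 1}"
  by (cases n) (auto simp: atLeastAtMostSuc_conv subset_insert)

lemma mem_S_lex_iff_restr:
  assumes "V \<subseteq> {v. length v = n}" "1 \<le> n" "n \<notin> \<tau>"
  shows "\<tau> \<in> S_lex n V \<longleftrightarrow> \<tau> \<in> S_lex (n - 1) (restr V False) \<union> S_lex (n - 1) (restr V True)"
proof (cases "\<tau> \<subseteq> {1..n - 1}")
  case True
  then have "finite \<tau>"
    using finite_subset by blast
  with assms(3) have "lookup (monom_of_set \<tau>) n = 0"
    by (simp add: lookup_monom_of_set)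
  moreover have "\<tau> \<subseteq> {1..n}"
    using True assms(3) subset_atLeastAtMost_diff_one_iff by blast
  ultimately show ?thesis
    using True lead_monoms_van_ideal_iff[OF assms(1,2)] unfolding Un_iff mem_S_lex_iff by blast
next
  case False
  with assms(3) have "\<not> \<tau> \<subseteq> {1..n}"
    using subset_atLeastAtMost_diff_one_iff by blast
  with False show ?thesis
    unfolding Un_iff mem_S_lex_iff by blast
qed

lemma insert_mem_S_lex_iff_restr:
  assumes "V \<subseteq> {v. length v = n}" "1 \<le> n" "n \<notin> \<sigma>"
  shows "insert n \<sigma> \<in> S_lex n V \<longleftrightarrow>
         \<sigma> \<in> S_lex (n - 1) (restr V False) \<inter> S_lex (n - 1) (restr V True)"
proof (cases "\<sigma> \<subseteq> {1..n - 1}")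
  case True
  then have "finite \<sigma>"
    using finite_subset by blast
  with assms(3) have "lookup (monom_of_set \<sigma>) n = 0"
    and "monom_of_set (insert n \<sigma>) = single n 1 + monom_of_set \<sigma>"
    by (simp_all add: lookup_monom_of_set monom_of_set_insert)
  moreover have "insert n \<sigma> \<subseteq> {1..n}"
    using True assms(2,3) subset_atLeastAtMost_diff_one_iff by auto
  ultimately show ?thesis
    using True var_lead_monoms_van_ideal_iff[OF assms(1,2)] unfolding Int_iff mem_S_lex_iff by auto
next
  case False
  with assms(3) have "\<not> insert n \<sigma> \<subseteq> {1..n}"
    using subset_atLeastAtMost_diff_one_iff by blast
  with False show ?thesis
    unfolding Int_iff mem_S_lex_iff by blast
qed

theorem lemma3p1:
  fixes n :: nat and V :: "bool list set"
  assumes "n \<ge> 1"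
    and "V \<subseteq> {v. length v = n}"
    and "V \<noteq> {}"
  shows "S_lex n V = S_lex (n - 1) (restr V False) \<union> S_lex (n - 1) (restr V True)
           \<union> cone n (S_lex (n - 1) (restr V False) \<inter> S_lex (n - 1) (restr V True))"
proof (rule set_eqI)
  fix \<tau>
  let ?S0 = "S_lex (n - 1) (restr V False)" and ?S1 = "S_lex (n - 1) (restr V True)"
  have avoid: "\<forall>\<sigma>\<in>?S0 \<inter> ?S1. n \<notin> \<sigma>"
    by (fastforce simp: mem_S_lex_iff)
  show "\<tau> \<in> S_lex n V \<longleftrightarrow> \<tau> \<in> ?S0 \<union> ?S1 \<union> cone n (?S0 \<inter> ?S1)"
  proof (cases "n \<in> \<tau>")
    case True
    then have "\<tau> = insert n (\<tau> - {n})"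
      by blast
    moreover have "\<tau> \<notin> ?S0" "\<tau> \<notin> ?S1"
      using True by (fastforce simp: mem_S_lex_iff)+
    ultimately show ?thesis
      using True insert_mem_S_lex_iff_restr[OF assms(2,1), of "\<tau> - {n}"] mem_cone_iff[OF avoid, of \<tau>]
      by auto
  next
    case False
    then show ?thesis
      using mem_S_lex_iff_restr[OF assms(2,1) False] mem_cone_iff[OF avoid, of \<tau>] by auto
  qed
qed

end
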